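(* Let $G = (V, E)$ be a directed proximity graph whose finitely many nodes $V$ correspond to vectors of a finite set $\mathcal{D} \subset \mathbb{R}^d$ (each node identified with its vector), and let $q \in \mathbb{R}^d$ be a query. For a node $o$, let $\mathcal{N}_o = \{p \mid (p, o) \in E\}$. Then there exists a scalar $\bar{\mu}$ such that for every $\mu > \max(\bar{\mu}, 0)$ and every node $o$ on the search path of the greedy graph nearest neighbor search (GNNS) run with query $q' = \mu q$ and having $\mathcal{N}_o \neq \emptyset$, there is a node $p^* \in \mathcal{N}_o$ with $$p^* \in \Big\{\operatorname{argmax}_{p \in \mathcal{N}_o} \langle p, q\rangle\Big\} \cap \Big\{\operatorname{argmin}_{p \in \mathcal{N}_o} \lVert p - q'\rVert\Big\}.$$
   Context: A proximity graph on $\mathcal{D}$ is a directed graph whose nodes are the points of $\mathcal{D}$ and whose edges are chosen by some criterion (the criterion is arbitrary here). Greedy graph nearest neighbor search (GNNS) with query $x$: starting from entry nodes, it repeatedly takes the current best candidate node, inspects its neighbors in $G$, and moves toward / keeps the neighbors closest to $x$ in Euclidean distance (maintaining a bounded candidate pool), until no improvement is possible; the nodes it visits form its search path. $\lVert\cdot\rVert$ is the Euclidean norm and $\langle\cdot,\cdot\rangle$ the standard inner product. *)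

theory Defs
  imports "HOL-Analysis.Analysis"
begin

definition in_nbrs :: "('a \<times> 'a) set \<Rightarrow> 'a \<Rightarrow> 'a set" where
  "in_nbrs E v = {p. (p, v) \<in> E}"

definition argmax_on :: "('a \<Rightarrow> real) \<Rightarrow> 'a set \<Rightarrow> 'a set" where
  "argmax_on f S = {x \<in> S. \<forall>y\<in>S. f y \<le> f x}"

definition argmin_on :: "('a \<Rightarrow> real) \<Rightarrow> 'a set \<Rightarrow> 'a set" where
  "argmin_on f S = {x \<in> S. \<forall>y\<in>S. f x \<le> f y}"

end

theory Submission
  imports Defs
begin

text \<open>Expanding the square,
  \<open>\<parallel>p - \<mu> q\<parallel>\<^sup>2 = \<parallel>p\<parallel>\<^sup>2 - 2 \<mu> \<langle>p, q\<rangle> + \<mu>\<^sup>2 \<parallel>q\<parallel>\<^sup>2\<close>,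
  so for large \<open>\<mu>\<close> the distance to \<open>\<mu> q\<close> is ordered first by \<open>-\<langle>p, q\<rangle>\<close> and then by \<open>\<parallel>p\<parallel>\<close>.
  Among the finitely many in-neighbours of a node, a maximiser of \<open>\<langle>p, q\<rangle>\<close> of least norm
  is therefore eventually a nearest neighbour of \<open>\<mu> q\<close>; since there are finitely many
  nodes, one threshold serves them all.\<close>

lemma norm_diff_scaleR_le_iff:
  fixes p y q :: "'a::real_inner"
  shows "norm (p - \<mu> *\<^sub>R q) \<le> norm (y - \<mu> *\<^sub>R q) \<longleftrightarrow>
         (norm p)\<^sup>2 - (norm y)\<^sup>2 \<le> 2 * \<mu> * (inner p q - inner y q)"
proof -
  have expand: "(norm (x - \<mu> *\<^sub>R q))\<^sup>2 = (norm x)\<^sup>2 - 2 * \<mu> * inner x q + \<mu>\<^sup>2 * (norm q)\<^sup>2"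
    for x :: 'a
    unfolding power2_norm_eq_inner
    by (simp add: inner_diff_left inner_diff_right inner_commute algebra_simps power2_eq_square)
  have "norm (p - \<mu> *\<^sub>R q) \<le> norm (y - \<mu> *\<^sub>R q) \<longleftrightarrow>
        (norm (p - \<mu> *\<^sub>R q))\<^sup>2 \<le> (norm (y - \<mu> *\<^sub>R q))\<^sup>2"
    by (simp add: abs_le_square_iff[symmetric])
  then show ?thesis
    unfolding expand by (simp add: algebra_simps)
qed

lemma argmax_on_nonempty:
  assumes "finite S" and "S \<noteq> {}"
  shows "argmax_on f S \<noteq> {}"
proof -
  have "Max (f ` S) \<in> f ` S"
    using assms by simp
  then obtain x where "x \<in> S" and "f x = Max (f ` S)"
    by auto
  then have "x \<in> argmax_on f S"
    using assms(1) by (simp add: argmax_on_def)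
  then show ?thesis by blast
qed

lemma argmin_on_nonempty:
  assumes "finite S" and "S \<noteq> {}"
  shows "argmin_on f S \<noteq> {}"
proof -
  have "Min (f ` S) \<in> f ` S"
    using assms by simp
  then obtain x where "x \<in> S" and "f x = Min (f ` S)"
    by auto
  then have "x \<in> argmin_on f S"
    using assms(1) by (simp add: argmin_on_def)
  then show ?thesis by blast
qed

lemma eventually_norm_diff_scaleR_le:
  fixes p y q :: "'a::real_inner"
  assumes "inner y q < inner p q"
  shows "eventually (\<lambda>\<mu>. norm (p - \<mu> *\<^sub>R q) \<le> norm (y - \<mu> *\<^sub>R q)) at_top"
proof (rule eventually_at_top_linorderI)
  fix \<mu> :: real
  assume "((norm p)\<^sup>2 - (norm y)\<^sup>2) / (2 * (inner p q - inner y q)) \<le> \<mu>"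
  then have "(norm p)\<^sup>2 - (norm y)\<^sup>2 \<le> \<mu> * (2 * (inner p q - inner y q))"
    using assms by (simp add: divide_le_eq)
  then show "norm (p - \<mu> *\<^sub>R q) \<le> norm (y - \<mu> *\<^sub>R q)"
    by (simp add: norm_diff_scaleR_le_iff mult_ac)
qed

lemma eventually_argmax_inner_argmin_dist:
  fixes N :: "'a::real_inner set"
  assumes "finite N" and "N \<noteq> {}"
  shows "eventually (\<lambda>\<mu>. \<exists>p\<in>N. p \<in> argmax_on (\<lambda>p. inner p q) N
                                  \<inter> argmin_on (\<lambda>p. norm (p - \<mu> *\<^sub>R q)) N) at_top"
proof -
  define A where "A = argmax_on (\<lambda>p. inner p q) N"
  have "finite A"
    using assms(1) by (simp add: A_def argmax_on_def)
  moreover have "A \<noteq> {}"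
    unfolding A_def using assms by (rule argmax_on_nonempty)
  ultimately obtain p where p: "p \<in> argmin_on norm A"
    using argmin_on_nonempty by blast
  then have "p \<in> A" and "p \<in> N" and p_max: "\<forall>y\<in>N. inner y q \<le> inner p q"
    by (auto simp: argmin_on_def A_def argmax_on_def)
  have "eventually (\<lambda>\<mu>. norm (p - \<mu> *\<^sub>R q) \<le> norm (y - \<mu> *\<^sub>R q)) at_top" if "y \<in> N" for y
  proof (cases "inner y q = inner p q")
    case True
    then have "y \<in> A"
      using \<open>y \<in> N\<close> p_max by (auto simp: A_def argmax_on_def)
    then have "norm p \<le> norm y"
      using p by (simp add: argmin_on_def)
    then have "(norm p)\<^sup>2 \<le> (norm y)\<^sup>2"
      by (simp add: power_mono)
    then show ?thesis
      using True by (simp add: norm_diff_scaleR_le_iff)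
  next
    case False
    with p_max \<open>y \<in> N\<close> have "inner y q < inner p q"
      by (simp add: order_less_le)
    then show ?thesis
      by (rule eventually_norm_diff_scaleR_le)
  qed
  then have "eventually (\<lambda>\<mu>. \<forall>y\<in>N. norm (p - \<mu> *\<^sub>R q) \<le> norm (y - \<mu> *\<^sub>R q)) at_top"
    using assms(1) by (intro eventually_ball_finite) auto
  then show ?thesis
  proof eventually_elim
    case (elim \<mu>)
    then have "p \<in> argmin_on (\<lambda>p. norm (p - \<mu> *\<^sub>R q)) N"
      using \<open>p \<in> N\<close> by (simp add: argmin_on_def)
    with \<open>p \<in> A\<close> \<open>p \<in> N\<close> show ?case
      by (auto simp: A_def)
  qed
qed

theorem theorem2:
  fixes D :: "(real^'n) set"
    and E :: "((real^'n) \<times> (real^'n)) set"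
    and q :: "real^'n"
    and search_path :: "real^'n \<Rightarrow> (real^'n) set"
  assumes "finite D"
    and "E \<subseteq> D \<times> D"
    and "\<forall>x. search_path x \<subseteq> D"
  shows "\<exists>mubar::real. \<forall>mu::real. mu > max mubar 0 \<longrightarrow>
           (\<forall>v \<in> search_path (mu *\<^sub>R q). in_nbrs E v \<noteq> {} \<longrightarrow>
              (\<exists>p \<in> in_nbrs E v.
                 p \<in> argmax_on (\<lambda>p. inner p q) (in_nbrs E v)
                    \<inter> argmin_on (\<lambda>p. norm (p - mu *\<^sub>R q)) (in_nbrs E v)))"
proof -
  have "in_nbrs E v \<subseteq> D" for v
    using assms(2) by (auto simp: in_nbrs_def)
  then have fin_nbrs: "finite (in_nbrs E v)" for v
    using assms(1) by (rule finite_subset)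
  define good where "good mu v \<longleftrightarrow> (\<exists>p \<in> in_nbrs E v.
    p \<in> argmax_on (\<lambda>p. inner p q) (in_nbrs E v) \<inter> argmin_on (\<lambda>p. norm (p - mu *\<^sub>R q)) (in_nbrs E v))"
    for mu v
  have "eventually (\<lambda>mu. in_nbrs E v \<noteq> {} \<longrightarrow> good mu v) at_top" for v
  proof (cases "in_nbrs E v = {}")
    case False
    have "eventually (\<lambda>mu. good mu v) at_top"
      unfolding good_def using fin_nbrs False by (rule eventually_argmax_inner_argmin_dist)
    then show ?thesis
      by (rule eventually_mono) simp
  qed simp
  then have "eventually (\<lambda>mu. \<forall>v\<in>D. in_nbrs E v \<noteq> {} \<longrightarrow> good mu v) at_top"
    using assms(1) by (simp add: eventually_ball_finite_distrib)
  then obtain mubar :: real where mubar: "\<And>mu v. mu \<ge> mubar \<Longrightarrow> v \<in> D \<Longrightarrow> in_nbrs E v \<noteq> {} \<Longrightarrow> good mu v"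
    unfolding eventually_at_top_linorder by blast
  show ?thesis
  proof (intro exI[of _ mubar] allI impI ballI)
    fix mu v
    assume "mu > max mubar 0" and "v \<in> search_path (mu *\<^sub>R q)" and "in_nbrs E v \<noteq> {}"
    with assms(3) have "good mu v"
      by (intro mubar) auto
    then show "\<exists>p \<in> in_nbrs E v. p \<in> argmax_on (\<lambda>p. inner p q) (in_nbrs E v)
                 \<inter> argmin_on (\<lambda>p. norm (p - mu *\<^sub>R q)) (in_nbrs E v)"
      by (simp add: good_def)
  qed
qed

end
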